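(* Let $m\ge1$ and consider a preferential (dynamic) attachment circuit of index $m$. For $0\le j\le n$ let $D^{(m)}_{n,j}$ be the degree (indegree plus outdegree, edges counted with multiplicity) of node $j$ at time $n$. Then for $n\ge j$ and every integer $d$, $$\mathbb{P}\bigl(D^{(m)}_{n,j}=d\bigr)=\bigl(d-m(1-\delta_{j,0})\bigr)!\sum_{\substack{b_1+\cdots+b_{n-j}=m(n-j+1-\delta_{j,0})-d\\ 0\le b_1\le\min\{m,(m+1)j\}}}\left(\prod_{r=1}^{n-j}\binom{m}{b_r}\right)\frac{\prod_{r=1}^{n-j}\bigl\langle (m+1)j+\sum_{\ell=1}^{r-1}b_\ell+r-1\bigr\rangle_{b_r}}{\prod_{r=0}^{n-j-1}\langle (m+1)(j+r)+1\rangle_m},$$ where the sum is over tuples $(b_1,\dots,b_{n-j})$ of nonnegative integers.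
   Context: Preferential (dynamic) attachment circuit of index $m\ge1$: at time $0$ there is a single node labeled $0$. At each time $n\ge1$ a new node labeled $n$ is added and $m$ parents are chosen for it one at a time, with replacement, among nodes $0,\dots,n-1$. Before the $(i+1)$-th choice ($i=0,\dots,m-1$), each existing node $v$ is chosen with probability $\frac{d_i(v)+1}{\sum_{x}(d_i(x)+1)}$, where $d_i(x)$ is the outdegree of $x$ in the current multigraph including the edges created by the first $i$ choices for node $n$; after each choice an edge from the chosen parent to node $n$ is immediately added (multi-edges allowed). $\langle x\rangle_s=x(x+1)\cdots(x+s-1)$ is the rising factorial, $\langle x\rangle_0=1$; $\delta_{j,0}$ is the Kronecker delta. *)

theory Defs
  imports "HOL-Probability.Probability"
begin

text \<open>State of the circuit: the outdegree function d :: nat \<Rightarrow> nat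
  (edges counted with multiplicity).\<close>

definition choose_parent :: "nat \<Rightarrow> (nat \<Rightarrow> nat) \<Rightarrow> nat pmf" where
  "choose_parent k d = pmf_of_multiset (\<Sum>v<k. replicate_mset (d v + 1) v)"

definition add_edge :: "nat \<Rightarrow> (nat \<Rightarrow> nat) \<Rightarrow> (nat \<Rightarrow> nat) pmf" where
  "add_edge k d = map_pmf (\<lambda>v. d(v := d v + 1)) (choose_parent k d)"

fun attach :: "nat \<Rightarrow> nat \<Rightarrow> (nat \<Rightarrow> nat) \<Rightarrow> (nat \<Rightarrow> nat) pmf" where
  "attach 0 k d = return_pmf d"
| "attach (Suc i) k d = bind_pmf (add_edge k d) (attach i k)"

text \<open>Distribution of the outdegree function at time n for the
  preferential attachment circuit of index m. At time n+1,
  node n+1 chooses m parents among nodes 0..n.\<close>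
fun pa_outdeg :: "nat \<Rightarrow> nat \<Rightarrow> (nat \<Rightarrow> nat) pmf" where
  "pa_outdeg m 0 = return_pmf (\<lambda>_. 0)"
| "pa_outdeg m (Suc n) = bind_pmf (pa_outdeg m n) (attach m (Suc n))"

text \<open>Degree (indegree + outdegree) of node j at time n:
  node j \<ge> 1 has indegree m, node 0 has indegree 0.\<close>
definition pa_degree :: "nat \<Rightarrow> nat \<Rightarrow> nat \<Rightarrow> int pmf" where
  "pa_degree m n j = map_pmf (\<lambda>d. int (d j) + (if j = 0 then 0 else int m)) (pa_outdeg m n)"

definition kdelta :: "nat \<Rightarrow> nat \<Rightarrow> int" where
  "kdelta a b = (if a = b then 1 else 0)"

end

theory Submission
  imports Defs
begin

text \<open>
  Seen from node j, the m parent choices of a new node form a Polya urn: node j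
  has weight (outdegree + 1) and all other nodes are lumped into one colour, whose
  weight is fixed by the total weight (m + 1) n + 1 at time n. The m draws of node n + 1
  therefore follow the Polya-Eggenberger law, and the outdegree of node j is a
  Markov chain started at 0 at time j. Unfolding this chain, let b_r be the number of
  parents of node j + r other than j. The rising factorials of j's colour telescope to
  the factorial of the final outdegree, those of the other colour give the products
  in the formula, and summing over all (b_1, ..., b_{n-j}) gives the distribution; the
  degree adds the indegree m of a non-root node.
\<close>

lemma sum_fun_upd_Suc:
  fixes f :: "'a \<Rightarrow> nat"
  assumes "finite A" "v \<in> A"
  shows "(\<Sum>u\<in>A. (f(v := Suc (f v))) u) = Suc (\<Sum>u\<in>A. f u)"
proof -
  have "(\<Sum>u\<in>A - {v}. (f(v := Suc (f v))) u) = (\<Sum>u\<in>A - {v}. f u)"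
    by (intro sum.cong) auto
  then show ?thesis
    by (simp add: sum.remove[OF assms])
qed

lemma fact_mult_pochhammer: "fact x * pochhammer (real x + 1) k = fact (x + k)"
  unfolding pochhammer_fact pochhammer_product'[of 1 x k] by (simp add: add.commute[of 1 "real x"])

section \<open>Reduction to a Polya urn\<close>

abbreviation parent_weights :: "nat \<Rightarrow> (nat \<Rightarrow> nat) \<Rightarrow> nat multiset" where
  "parent_weights k d \<equiv> \<Sum>v<k. replicate_mset (d v + 1) v"

definition total_weight :: "nat \<Rightarrow> (nat \<Rightarrow> nat) \<Rightarrow> nat" where
  "total_weight k d = (\<Sum>v<k. d v + 1)"

lemma count_parent_weights: "count (parent_weights k d) u = (if u < k then d u + 1 else 0)"
proof -
  have "count (parent_weights k d) u = (\<Sum>v<k. if v = u then d v + 1 else 0)"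
    unfolding count_sum by (intro sum.cong) (auto simp del: replicate_mset_Suc)
  also have "\<dots> = (if u < k then d u + 1 else 0)"
    by (simp only: sum.delta[OF finite_lessThan]) simp
  finally show ?thesis .
qed

lemma size_parent_weights: "size (parent_weights k d) = total_weight k d"
  unfolding total_weight_def size_multiset_sum size_replicate_mset ..

lemma set_parent_weights: "set_mset (parent_weights k d) = {..<k}"
proof (intro set_eqI)
  fix u
  show "u \<in># parent_weights k d \<longleftrightarrow> u \<in> {..<k}"
  proof -
    have "u \<in># parent_weights k d \<longleftrightarrow> 0 < count (parent_weights k d) u"
      by (rule count_greater_zero_iff[symmetric])
    also have "\<dots> \<longleftrightarrow> u < k"
      unfolding count_parent_weights by simp
    finally show ?thesis
      by (simp only: lessThan_iff)
  qed
qed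

lemma parent_weights_nonempty: "0 < k \<Longrightarrow> parent_weights k d \<noteq> {#}"
proof -
  assume "0 < k"
  then have "0 \<in> set_mset (parent_weights k d)"
    unfolding set_parent_weights by simp
  then show ?thesis
    by (metis empty_iff set_mset_empty)
qed

lemma set_pmf_choose_parent: "0 < k \<Longrightarrow> set_pmf (choose_parent k d) = {..<k}"
  unfolding choose_parent_def
  by (simp only: set_pmf_of_multiset[OF parent_weights_nonempty] set_parent_weights)

lemma choose_parent_eq_bernoulli:
  assumes "j < k"
  shows "map_pmf (\<lambda>v. v = j) (choose_parent k d) = bernoulli_pmf ((real (d j) + 1) / real (total_weight k d))"
proof -
  have ne: "parent_weights k d \<noteq> {#}"
    using assms by (intro parent_weights_nonempty) simp
  have "d j + 1 \<le> total_weight k d"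
    unfolding total_weight_def using member_le_sum[of j "{..<k}" "\<lambda>v. d v + 1"] assms by simp
  then have p: "(real (d j) + 1) / real (total_weight k d) \<le> 1"
    by simp
  have "pmf (map_pmf (\<lambda>v. v = j) (choose_parent k d)) True = pmf (choose_parent k d) j"
  proof -
    have "(\<lambda>v. v = j) -` {True} = {j}"
      by auto
    then show ?thesis
      by (simp add: pmf_map measure_pmf_single)
  qed
  also have "\<dots> = (real (d j) + 1) / real (total_weight k d)"
    unfolding choose_parent_def pmf_of_multiset[OF ne] count_parent_weights size_parent_weights
    using assms by simp
  finally have T: "pmf (map_pmf (\<lambda>v. v = j) (choose_parent k d)) True = (real (d j) + 1) / real (total_weight k d)" .
  show ?thesis
  proof (rule pmf_eqI)
    fix b :: bool
    show "pmf (map_pmf (\<lambda>v. v = j) (choose_parent k d)) b = pmf (bernoulli_pmf ((real (d j) + 1) / real (total_weight k d))) b"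
      using T p pmf_False_conv_True[of "map_pmf (\<lambda>v. v = j) (choose_parent k d)"] by (cases b) simp_all
  qed
qed

lemma total_weight_eq: "total_weight k d = (\<Sum>v<k. d v) + k"
  unfolding total_weight_def sum.distrib by simp

lemma total_weight_add_edge: "v < k \<Longrightarrow> total_weight k (d(v := Suc (d v))) = Suc (total_weight k d)"
  unfolding total_weight_eq by (simp add: sum_fun_upd_Suc del: fun_upd_apply)

text \<open>
  polya_urn i W x: the distinguished colour has been drawn x times and has weight x + 1,
  the urn has total weight W, and each of the i draws adds one unit of weight to the
  colour drawn.
\<close>

fun polya_urn :: "nat \<Rightarrow> nat \<Rightarrow> nat \<Rightarrow> nat pmf" where
  "polya_urn 0 W x = return_pmf x"
| "polya_urn (Suc i) W x = bind_pmf (bernoulli_pmf ((real x + 1) / real W))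
      (\<lambda>b. polya_urn i (Suc W) (if b then Suc x else x))"

lemma attach_marginal:
  assumes "j < k"
  shows "map_pmf (\<lambda>d. d j) (attach i k d) = polya_urn i (total_weight k d) (d j)"
proof (induction i arbitrary: d)
  case 0
  then show ?case
    by simp
next
  case (Suc i)
  have k: "0 < k"
    using assms by simp
  have "map_pmf (\<lambda>d. d j) (attach (Suc i) k d)
      = bind_pmf (choose_parent k d) (\<lambda>v. map_pmf (\<lambda>d. d j) (attach i k (d(v := d v + 1))))"
    unfolding attach.simps add_edge_def map_bind_pmf bind_map_pmf by (rule refl)
  also have "\<dots> = bind_pmf (choose_parent k d) (\<lambda>v. polya_urn i (Suc (total_weight k d)) (if v = j then Suc (d j) else d j))"
  proof (intro bind_pmf_cong refl)
    fix v
    assume "v \<in> set_pmf (choose_parent k d)"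
    then have weight: "total_weight k (d(v := Suc (d v))) = Suc (total_weight k d)"
      by (simp add: set_pmf_choose_parent[OF k] total_weight_add_edge)
    show "map_pmf (\<lambda>d. d j) (attach i k (d(v := d v + 1)))
        = polya_urn i (Suc (total_weight k d)) (if v = j then Suc (d j) else d j)"
      unfolding Suc.IH Suc_eq_plus1[symmetric] weight by simp
  qed
  also have "\<dots> = bind_pmf (map_pmf (\<lambda>v. v = j) (choose_parent k d)) (\<lambda>b. polya_urn i (Suc (total_weight k d)) (if b then Suc (d j) else d j))"
    by (simp add: bind_map_pmf)
  also have "\<dots> = polya_urn (Suc i) (total_weight k d) (d j)"
    by (simp add: choose_parent_eq_bernoulli[OF assms])
  finally show ?case .
qed

lemma set_pmf_attach:
  assumes "0 < k" "d' \<in> set_pmf (attach i k d)"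
  shows "(\<forall>v\<ge>k. d' v = d v) \<and> (\<Sum>v<k. d' v) = (\<Sum>v<k. d v) + i"
  using assms(2)
proof (induction i arbitrary: d)
  case 0
  then show ?case
    by simp
next
  case (Suc i)
  then obtain v where v: "v < k" "d' \<in> set_pmf (attach i k (d(v := d v + 1)))"
    by (auto simp: add_edge_def set_pmf_choose_parent[OF assms(1)])
  moreover have "(\<Sum>u<k. (d(v := Suc (d v))) u) = Suc (\<Sum>u<k. d u)"
    using v(1) by (simp add: sum_fun_upd_Suc del: fun_upd_apply)
  ultimately show ?case
    using Suc.IH[OF v(2)] by auto
qed

lemma set_pmf_pa_outdeg:
  assumes "d \<in> set_pmf (pa_outdeg m n)"
  shows "(\<forall>v\<ge>n. d v = 0) \<and> (\<Sum>v<Suc n. d v) = m * n"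
  using assms
proof (induction n arbitrary: d)
  case 0
  then show ?case
    by simp
next
  case (Suc n)
  then obtain d0 where d0: "d0 \<in> set_pmf (pa_outdeg m n)" "d \<in> set_pmf (attach m (Suc n) d0)"
    by auto
  note IH = Suc.IH[OF d0(1)] and step = set_pmf_attach[OF zero_less_Suc d0(2)]
  then have zero: "\<forall>v\<ge>Suc n. d v = 0"
    by auto
  then have "(\<Sum>v<Suc (Suc n). d v) = (\<Sum>v<Suc n. d v)"
    by simp
  also have "\<dots> = m * Suc n"
    using IH step by (simp del: sum.lessThan_Suc)
  finally show ?case
    using zero by blast
qed

definition node_outdeg :: "nat \<Rightarrow> nat \<Rightarrow> nat \<Rightarrow> nat pmf" where
  "node_outdeg m n j = map_pmf (\<lambda>d. d j) (pa_outdeg m n)"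

lemma node_outdeg_self: "node_outdeg m j j = return_pmf 0"
proof -
  have "node_outdeg m j j = map_pmf (\<lambda>_. 0) (pa_outdeg m j)"
    unfolding node_outdeg_def by (intro map_pmf_cong refl) (use set_pmf_pa_outdeg in auto)
  then show ?thesis
    by (simp add: map_pmf_const)
qed

lemma node_outdeg_Suc:
  assumes "j \<le> n"
  shows "node_outdeg m (Suc n) j = bind_pmf (node_outdeg m n j) (polya_urn m (Suc ((m + 1) * n)))"
proof -
  have "map_pmf (\<lambda>d. d j) (attach m (Suc n) d) = polya_urn m (Suc ((m + 1) * n)) (d j)"
    if "d \<in> set_pmf (pa_outdeg m n)" for d
  proof -
    have "total_weight (Suc n) d = Suc ((m + 1) * n)"
      unfolding total_weight_eq using set_pmf_pa_outdeg[OF that] by (simp del: sum.lessThan_Suc)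
    then show ?thesis
      using attach_marginal[of j "Suc n" m d] assms by simp
  qed
  then show ?thesis
    unfolding node_outdeg_def by (simp add: map_bind_pmf bind_map_pmf cong: bind_pmf_cong)
qed

section \<open>The Polya-Eggenberger distribution\<close>

text \<open>It vanishes for h > i through the binomial coefficient, despite the truncated i - h.\<close>

definition polya_pmf :: "nat \<Rightarrow> real \<Rightarrow> real \<Rightarrow> nat \<Rightarrow> real" where
  "polya_pmf i a c h = real (i choose h) * pochhammer a h * pochhammer c (i - h) / pochhammer (a + c) i"

lemma polya_pmf_eq_0: "i < h \<Longrightarrow> polya_pmf i a c h = 0"
  by (simp add: polya_pmf_def)

lemma polya_pmf_Suc_0: "a + c \<noteq> 0 \<Longrightarrow> polya_pmf (Suc i) a c 0 = c / (a + c) * polya_pmf i a (c + 1) 0"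
  unfolding polya_pmf_def by (simp add: pochhammer_rec field_simps)

lemma polya_pmf_Suc_Suc:
  assumes "a + c \<noteq> 0"
  shows "polya_pmf (Suc i) a c (Suc h) = a / (a + c) * polya_pmf i (a + 1) c h + c / (a + c) * polya_pmf i a (c + 1) (Suc h)"
proof (cases "h < i")
  case True
  then obtain e where e: "i - h = Suc e"
    by (metis Suc_diff_Suc)
  then have "i - Suc h = e"
    by simp
  moreover have "real (Suc i choose Suc h) = real (i choose h) + real (i choose Suc h)"
    by simp
  moreover have "pochhammer (a + c) (Suc i) = (a + c) * pochhammer (a + c + 1) i"
    by (simp add: pochhammer_rec add.assoc)
  ultimately show ?thesis
    using assms e unfolding polya_pmf_def
    by (simp add: pochhammer_rec field_simps add_ac) (simp add: add_divide_distrib)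
next
  case False
  then consider "h = i" | "i < h"
    by linarith
  then show ?thesis
  proof cases
    case 1
    then show ?thesis
      using assms unfolding polya_pmf_def by (simp add: pochhammer_rec field_simps add_ac)
  next
    case 2
    then show ?thesis
      by (simp add: polya_pmf_eq_0)
  qed
qed

lemma pmf_polya_urn:
  "x < W \<Longrightarrow> pmf (polya_urn i W x) y =
     (if x \<le> y then polya_pmf i (real x + 1) (real W - real x - 1) (y - x) else 0)"
proof (induction i arbitrary: W x)
  case 0
  then show ?case
    by (auto simp: polya_pmf_def indicator_def)
next
  case (Suc i)
  define a where "a = real x + 1"
  define c where "c = real W - real x - 1"
  have W: "real W = a + c" and ac: "a + c \<noteq> 0"
    using Suc.prems unfolding a_def c_def by simp_all
  have p: "(real x + 1) / real W = a / (a + c)" "1 - (real x + 1) / real W = c / (a + c)"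
    using ac unfolding W a_def by (simp_all add: field_simps)
  have "0 \<le> (real x + 1) / real W" "(real x + 1) / real W \<le> 1"
    using Suc.prems by simp_all
  then have "pmf (polya_urn (Suc i) W x) y = a / (a + c) * pmf (polya_urn i (Suc W) (Suc x)) y
      + c / (a + c) * pmf (polya_urn i (Suc W) x) y"
    unfolding polya_urn.simps pmf_bind integral_bernoulli_pmf p[symmetric] by simp
  also have "\<dots> = a / (a + c) * (if Suc x \<le> y then polya_pmf i (a + 1) c (y - Suc x) else 0)
      + c / (a + c) * (if x \<le> y then polya_pmf i a (c + 1) (y - x) else 0)"
    using Suc.prems unfolding Suc.IH[OF Suc_mono[OF Suc.prems]] Suc.IH[OF less_SucI[OF Suc.prems]]
    by (simp add: a_def c_def algebra_simps)
  also have "\<dots> = (if x \<le> y then polya_pmf (Suc i) a c (y - x) else 0)"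
  proof (cases "x < y")
    case True
    then obtain h where "y - x = Suc h" "y - Suc x = h"
      by (metis Suc_diff_Suc diff_Suc_Suc)
    then show ?thesis
      using True polya_pmf_Suc_Suc[OF ac, of i h] by simp
  next
    case False
    then show ?thesis
      using polya_pmf_Suc_0[OF ac, of i] by auto
  qed
  finally show ?case
    unfolding a_def c_def .
qed

lemma sum_polya_pmf_window:
  "(\<Sum>x\<le>N. f x * (if x \<le> y then polya_pmf m (a x) (c x) (y - x) else 0))
    = (\<Sum>x\<in>{x. x \<le> N \<and> x \<le> y \<and> y \<le> x + m}. f x * polya_pmf m (a x) (c x) (y - x))"
proof (rule sum.mono_neutral_cong_right)
  show "\<forall>x\<in>{..N} - {x. x \<le> N \<and> x \<le> y \<and> y \<le> x + m}. f x * (if x \<le> y then polya_pmf m (a x) (c x) (y - x) else 0) = 0"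
  proof
    fix x
    assume x: "x \<in> {..N} - {x. x \<le> N \<and> x \<le> y \<and> y \<le> x + m}"
    show "f x * (if x \<le> y then polya_pmf m (a x) (c x) (y - x) else 0) = 0"
    proof (cases "x \<le> y")
      case True
      with x have "m < y - x"
        by auto
      then show ?thesis
        by (simp add: polya_pmf_eq_0)
    qed simp
  qed
qed auto

section \<open>Sums over weak compositions\<close>

definition weak_compositions :: "nat \<Rightarrow> nat \<Rightarrow> (nat \<Rightarrow> nat) set" where
  "weak_compositions r T = {b \<in> {1..r} \<rightarrow>\<^sub>E {..T}. (\<Sum>l=1..r. b l) = T}"

lemma finite_weak_compositions: "finite (weak_compositions r T)"
  unfolding weak_compositions_def by (rule finite_subset[OF _ finite_PiE[of "{1..r}" "\<lambda>_. {..T}"]]) auto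

lemma weak_compositions_0: "weak_compositions 0 T = (if T = 0 then {\<lambda>_. undefined} else {})"
  unfolding weak_compositions_def by auto

lemma bij_betw_weak_compositions_Suc:
  "bij_betw (\<lambda>(c, b). b(Suc r := c)) (SIGMA c:{..T}. weak_compositions r (T - c)) (weak_compositions (Suc r) T)"
proof (rule bij_betw_byWitness[where f' = "\<lambda>b. (b (Suc r), b(Suc r := undefined))"])
  show "\<forall>cb\<in>(SIGMA c:{..T}. weak_compositions r (T - c)). (\<lambda>b. (b (Suc r), b(Suc r := undefined))) ((\<lambda>(c, b). b(Suc r := c)) cb) = cb"
    by (auto simp: weak_compositions_def PiE_def extensional_def)
  show "\<forall>b\<in>weak_compositions (Suc r) T. (\<lambda>(c, b). b(Suc r := c)) (b (Suc r), b(Suc r := undefined)) = b"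
    by simp
  show "(\<lambda>(c, b). b(Suc r := c)) ` (SIGMA c:{..T}. weak_compositions r (T - c)) \<subseteq> weak_compositions (Suc r) T"
  proof clarify
    fix c b
    assume "c \<le> T" "b \<in> weak_compositions r (T - c)"
    moreover have "(\<Sum>l=1..r. (b(Suc r := c)) l) = (\<Sum>l=1..r. b l)"
      by (intro sum.cong) auto
    ultimately show "b(Suc r := c) \<in> weak_compositions (Suc r) T"
      by (auto simp: weak_compositions_def PiE_def extensional_def Pi_def)
  qed
  show "(\<lambda>b. (b (Suc r), b(Suc r := undefined))) ` weak_compositions (Suc r) T \<subseteq> (SIGMA c:{..T}. weak_compositions r (T - c))"
  proof clarify
    fix b
    assume b: "b \<in> weak_compositions (Suc r) T"
    then have sum: "(\<Sum>l=1..r. b l) + b (Suc r) = T"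
      by (simp add: weak_compositions_def)
    have "b l \<le> T - b (Suc r)" if "l \<in> {1..r}" for l
      using member_le_sum[of l "{1..r}" b] that sum by simp
    moreover have "(\<Sum>l=1..r. (b(Suc r := undefined)) l) = (\<Sum>l=1..r. b l)"
      by (intro sum.cong) auto
    ultimately show "b (Suc r) \<in> {..T} \<and> b(Suc r := undefined) \<in> weak_compositions r (T - b (Suc r))"
      using b sum by (auto simp: weak_compositions_def PiE_def extensional_def Pi_def)
  qed
qed

text \<open>
  b l is the number of parents of node j + l other than j; the base of the l-th rising
  factorial is the total weight of the nodes other than j just before node j + l arrives.
\<close>

definition composition_weight :: "nat \<Rightarrow> nat \<Rightarrow> nat \<Rightarrow> (nat \<Rightarrow> nat) \<Rightarrow> real" where
  "composition_weight m j r b = (\<Prod>l=1..r. real (m choose b l)) *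
     (\<Prod>l=1..r. pochhammer (real ((m + 1) * j + (\<Sum>i=1..l-1. b i) + l - 1)) (b l))"

definition composition_weight_sum :: "nat \<Rightarrow> nat \<Rightarrow> nat \<Rightarrow> nat \<Rightarrow> real" where
  "composition_weight_sum m j r T = (\<Sum>b\<in>weak_compositions r T. composition_weight m j r b)"

definition attachment_normaliser :: "nat \<Rightarrow> nat \<Rightarrow> nat \<Rightarrow> real" where
  "attachment_normaliser m j r = (\<Prod>l<r. pochhammer (real ((m + 1) * (j + l) + 1)) m)"

lemma composition_weight_fun_upd:
  assumes "b \<in> {1..r} \<rightarrow>\<^sub>E X"
  shows "composition_weight m j (Suc r) (b(Suc r := c)) =
    composition_weight m j r b * (real (m choose c) * pochhammer (real ((m + 1) * j + (\<Sum>l=1..r. b l) + r)) c)"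
proof -
  have prefix_sum: "(\<Sum>i=1..l-1. (b(Suc r := c)) i) = (\<Sum>i=1..l-1. b i)" if "l \<le> Suc r" for l
    using that by (intro sum.cong) auto
  have "(\<Prod>l=1..r. real (m choose (b(Suc r := c)) l)) = (\<Prod>l=1..r. real (m choose b l))"
    by (intro prod.cong) auto
  moreover have "(\<Prod>l=1..r. pochhammer (real ((m + 1) * j + (\<Sum>i=1..l-1. (b(Suc r := c)) i) + l - 1)) ((b(Suc r := c)) l))
      = (\<Prod>l=1..r. pochhammer (real ((m + 1) * j + (\<Sum>i=1..l-1. b i) + l - 1)) (b l))"
    using prefix_sum by (intro prod.cong) auto
  ultimately show ?thesis
    using prefix_sum[of "Suc r"] unfolding composition_weight_def by (simp add: algebra_simps)
qed

lemma composition_weight_sum_Suc: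
  "composition_weight_sum m j (Suc r) T = (\<Sum>c\<le>T. composition_weight_sum m j r (T - c) *
      (real (m choose c) * pochhammer (real ((m + 1) * j + (T - c) + r)) c))"
proof -
  have extend: "composition_weight m j (Suc r) (b(Suc r := c)) =
      composition_weight m j r b * (real (m choose c) * pochhammer (real ((m + 1) * j + (T - c) + r)) c)"
    if "b \<in> weak_compositions r (T - c)" for b c
    using that composition_weight_fun_upd[of b r "{..T - c}"] by (simp add: weak_compositions_def)
  have "composition_weight_sum m j (Suc r) T
      = (\<Sum>(c, b)\<in>(SIGMA c:{..T}. weak_compositions r (T - c)). composition_weight m j (Suc r) (b(Suc r := c)))"
    unfolding composition_weight_sum_def
    using sum.reindex_bij_betw[OF bij_betw_weak_compositions_Suc, of "composition_weight m j (Suc r)" r T]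
    by (simp add: case_prod_unfold)
  also have "\<dots> = (\<Sum>c\<le>T. \<Sum>b\<in>weak_compositions r (T - c). composition_weight m j (Suc r) (b(Suc r := c)))"
    by (rule sum.Sigma[symmetric]) (auto simp: finite_weak_compositions)
  also have "\<dots> = (\<Sum>c\<le>T. \<Sum>b\<in>weak_compositions r (T - c).
      composition_weight m j r b * (real (m choose c) * pochhammer (real ((m + 1) * j + (T - c) + r)) c))"
    by (intro sum.cong refl) (rule extend)
  finally show ?thesis
    unfolding composition_weight_sum_def sum_distrib_right .
qed

lemma composition_weight_sum_eq_0:
  assumes "m * r < T"
  shows "composition_weight_sum m j r T = 0"
  unfolding composition_weight_sum_def
proof (intro sum.neutral ballI)
  fix b
  assume b: "b \<in> weak_compositions r T"
  have "\<exists>l\<in>{1..r}. m < b l"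
  proof (rule ccontr)
    assume "\<not> ?thesis"
    then have "(\<Sum>l=1..r. b l) \<le> (\<Sum>l=1..r. m)"
      by (intro sum_mono) (auto simp: not_less)
    then show False
      using b assms by (simp add: weak_compositions_def mult.commute)
  qed
  then show "composition_weight m j r b = 0"
    unfolding composition_weight_def by (auto intro!: prod_zero)
qed

lemma composition_weight_sum_Suc_window:
  "composition_weight_sum m j (Suc r) T = (\<Sum>c\<in>{c. c \<le> T \<and> c \<le> m \<and> T - c \<le> m * r}.
      composition_weight_sum m j r (T - c) * (real (m choose c) * pochhammer (real ((m + 1) * j + (T - c) + r)) c))"
  unfolding composition_weight_sum_Suc
proof (rule sum.mono_neutral_right)
  show "\<forall>c\<in>{..T} - {c. c \<le> T \<and> c \<le> m \<and> T - c \<le> m * r}.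
      composition_weight_sum m j r (T - c) * (real (m choose c) * pochhammer (real ((m + 1) * j + (T - c) + r)) c) = 0"
  proof
    fix c
    assume c: "c \<in> {..T} - {c. c \<le> T \<and> c \<le> m \<and> T - c \<le> m * r}"
    show "composition_weight_sum m j r (T - c) * (real (m choose c) * pochhammer (real ((m + 1) * j + (T - c) + r)) c) = 0"
    proof (cases "c \<le> m")
      case True
      with c have "m * r < T - c"
        by auto
      then show ?thesis
        by (simp add: composition_weight_sum_eq_0)
    qed simp
  qed
qed auto

lemma attachment_normaliser_Suc:
  "attachment_normaliser m j (Suc r) = attachment_normaliser m j r * pochhammer (real ((m + 1) * (j + r) + 1)) m"
  unfolding attachment_normaliser_def by simp

lemma convolution_term:
  assumes "x \<le> m * r" "x \<le> y" "y \<le> x + m"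
  defines "c \<equiv> x + m - y" and "T \<equiv> m * Suc r - y"
  shows "fact x * composition_weight_sum m j r (m * r - x) / attachment_normaliser m j r *
      polya_pmf m (real x + 1) (real ((m + 1) * j + (m * r - x) + r)) (y - x)
    = fact y * (composition_weight_sum m j r (T - c) *
      (real (m choose c) * pochhammer (real ((m + 1) * j + (T - c) + r)) c)) / attachment_normaliser m j (Suc r)"
proof -
  have T: "T - c = m * r - x" and c: "m - (y - x) = c"
    using assms(1-3) unfolding c_def T_def by (simp_all add: algebra_simps)
  have binomial: "m choose (y - x) = m choose c"
    using binomial_symmetric[of "y - x" m] assms(3) c by simp
  have weight: "real x + 1 + real ((m + 1) * j + (m * r - x) + r) = real ((m + 1) * (j + r) + 1)"
    using assms(1) by (simp add: algebra_simps of_nat_diff)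
  have "polya_pmf m (real x + 1) (real ((m + 1) * j + (m * r - x) + r)) (y - x)
      = real (m choose c) * pochhammer (real x + 1) (y - x) * pochhammer (real ((m + 1) * j + (m * r - x) + r)) c
        / pochhammer (real ((m + 1) * (j + r) + 1)) m"
    unfolding polya_pmf_def c binomial weight ..
  moreover have "fact y = fact x * pochhammer (real x + 1) (y - x)"
    using fact_mult_pochhammer[of x "y - x"] assms(2) by simp
  ultimately show ?thesis
    unfolding attachment_normaliser_Suc T by (simp add: field_simps)
qed

section \<open>Distribution of the degree\<close>

definition outdeg_closed_form :: "nat \<Rightarrow> nat \<Rightarrow> nat \<Rightarrow> nat \<Rightarrow> real" where
  "outdeg_closed_form m j r x =
     (if x \<le> m * r then fact x * composition_weight_sum m j r (m * r - x) / attachment_normaliser m j r else 0)"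

lemma outdeg_closed_form_Suc:
  "outdeg_closed_form m j (Suc r) y = (\<Sum>x\<le>m * r. outdeg_closed_form m j r x *
      (if x \<le> y then polya_pmf m (real x + 1) (real ((m + 1) * j + (m * r - x) + r)) (y - x) else 0))"
proof (cases "y \<le> m * Suc r")
  case False
  then show ?thesis
    by (auto simp: outdeg_closed_form_def polya_pmf_eq_0 intro!: sum.neutral[symmetric])
next
  case True
  define T where "T = m * Suc r - y"
  \<comment> \<open>c parents of the newest node other than j correspond to j having outdegree x = y + c - m before.\<close>
  have "outdeg_closed_form m j (Suc r) y = (\<Sum>c\<in>{c. c \<le> T \<and> c \<le> m \<and> T - c \<le> m * r}.
      fact y * (composition_weight_sum m j r (T - c) *
      (real (m choose c) * pochhammer (real ((m + 1) * j + (T - c) + r)) c)) / attachment_normaliser m j (Suc r))"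
    using True unfolding outdeg_closed_form_def composition_weight_sum_Suc_window T_def
    by (simp add: sum_distrib_left sum_divide_distrib)
  also have "\<dots> = (\<Sum>x\<in>{x. x \<le> m * r \<and> x \<le> y \<and> y \<le> x + m}. outdeg_closed_form m j r x *
      polya_pmf m (real x + 1) (real ((m + 1) * j + (m * r - x) + r)) (y - x))"
  proof (rule sum.reindex_bij_witness[symmetric, where i = "\<lambda>c. y + c - m" and j = "\<lambda>x. x + m - y"])
    fix x
    assume "x \<in> {x. x \<le> m * r \<and> x \<le> y \<and> y \<le> x + m}"
    then show "y + (x + m - y) - m = x" "x + m - y \<in> {c. c \<le> T \<and> c \<le> m \<and> T - c \<le> m * r}"
      and "fact y * (composition_weight_sum m j r (T - (x + m - y)) * (real (m choose (x + m - y)) *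
          pochhammer (real ((m + 1) * j + (T - (x + m - y)) + r)) (x + m - y))) / attachment_normaliser m j (Suc r)
        = outdeg_closed_form m j r x * polya_pmf m (real x + 1) (real ((m + 1) * j + (m * r - x) + r)) (y - x)"
      using convolution_term[of x m r y j] unfolding T_def outdeg_closed_form_def by auto
  next
    fix c
    assume "c \<in> {c. c \<le> T \<and> c \<le> m \<and> T - c \<le> m * r}"
    then show "y + c - m + m - y = c" "y + c - m \<in> {x. x \<le> m * r \<and> x \<le> y \<and> y \<le> x + m}"
      using True unfolding T_def by auto
  qed
  also have "\<dots> = (\<Sum>x\<le>m * r. outdeg_closed_form m j r x *
      (if x \<le> y then polya_pmf m (real x + 1) (real ((m + 1) * j + (m * r - x) + r)) (y - x) else 0))"
    by (rule sum_polya_pmf_window[symmetric])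
  finally show ?thesis .
qed

lemma pmf_node_outdeg:
  "pmf (node_outdeg m (j + r) j) x = outdeg_closed_form m j r x"
proof (induction r arbitrary: x)
  case 0
  then show ?case
    by (simp add: node_outdeg_self outdeg_closed_form_def composition_weight_sum_def
        weak_compositions_0 composition_weight_def attachment_normaliser_def indicator_def)
next
  case (Suc r)
  have support: "x \<in> {..m * r}" if "x \<in> set_pmf (node_outdeg m (j + r) j)" for x
    using that by (auto simp: set_pmf_eq Suc.IH outdeg_closed_form_def split: if_splits)
  have "pmf (node_outdeg m (j + Suc r) j) y
      = (\<Sum>x\<le>m * r. pmf (node_outdeg m (j + r) j) x * pmf (polya_urn m (Suc ((m + 1) * (j + r))) x) y)" for y
    unfolding add_Suc_right node_outdeg_Suc[OF le_add1] pmf_bind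
    by (subst integral_measure_pmf[of "{..m * r}"]) (auto dest: support)
  also have "\<dots> y = outdeg_closed_form m j (Suc r) y" for y
    unfolding outdeg_closed_form_Suc Suc.IH
    by (intro sum.cong refl) (auto simp: pmf_polya_urn algebra_simps of_nat_diff outdeg_closed_form_def)
  finally show ?case .
qed

text \<open>For j = 0 the other nodes have total weight 0 when node 1 arrives.\<close>

lemma composition_weight_eq_0_large_first:
  assumes "1 \<le> r" "min m ((m + 1) * j) < b 1"
  shows "composition_weight m j r b = 0"
proof (cases "j = 0")
  case True
  then have "pochhammer (real ((m + 1) * j + (\<Sum>i=1..1-1. b i) + 1 - 1)) (b 1) = 0"
    using assms(2) by (simp add: pochhammer_0_left)
  then show ?thesis
    using assms(1) unfolding composition_weight_def by (auto intro!: prod_zero bexI[of _ 1])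
next
  case False
  then have "m choose b 1 = 0"
    using assms(2) by (cases j) auto
  then show ?thesis
    using assms(1) unfolding composition_weight_def by (auto intro!: prod_zero bexI[of _ 1])
qed

lemma sum_restricted_compositions:
  fixes T :: int
  shows "(\<Sum>b \<in> {b \<in> {1..r} \<rightarrow>\<^sub>E {..nat T}. int (\<Sum>l=1..r. b l) = T \<and> (1 \<le> r \<longrightarrow> b 1 \<le> min m ((m + 1) * j))}.
      composition_weight m j r b) = (if 0 \<le> T then composition_weight_sum m j r (nat T) else 0)"
proof (cases "0 \<le> T")
  case True
  then have "int (\<Sum>l=1..r. b l) = T \<longleftrightarrow> (\<Sum>l=1..r. b l) = nat T" for b :: "nat \<Rightarrow> nat"
    by linarith
  then have "{b \<in> {1..r} \<rightarrow>\<^sub>E {..nat T}. int (\<Sum>l=1..r. b l) = T \<and> (1 \<le> r \<longrightarrow> b 1 \<le> min m ((m + 1) * j))}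
      = {b \<in> weak_compositions r (nat T). 1 \<le> r \<longrightarrow> b 1 \<le> min m ((m + 1) * j)}"
    unfolding weak_compositions_def by blast
  moreover have "(\<Sum>b \<in> {b \<in> weak_compositions r (nat T). 1 \<le> r \<longrightarrow> b 1 \<le> min m ((m + 1) * j)}. composition_weight m j r b)
      = composition_weight_sum m j r (nat T)"
    unfolding composition_weight_sum_def
  proof (rule sum.mono_neutral_left)
    show "\<forall>b\<in>weak_compositions r (nat T) - {b \<in> weak_compositions r (nat T). 1 \<le> r \<longrightarrow> b 1 \<le> min m ((m + 1) * j)}.
        composition_weight m j r b = 0"
    proof
      fix b
      assume "b \<in> weak_compositions r (nat T) - {b \<in> weak_compositions r (nat T). 1 \<le> r \<longrightarrow> b 1 \<le> min m ((m + 1) * j)}"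
      then have "1 \<le> r" "min m ((m + 1) * j) < b 1"
        by auto
      then show "composition_weight m j r b = 0"
        by (rule composition_weight_eq_0_large_first)
    qed
  qed (auto simp: finite_weak_compositions)
  ultimately show ?thesis
    using True by simp
qed auto

lemma pmf_pa_degree:
  fixes m j :: nat and d :: int
  defines "off \<equiv> int m * (1 - kdelta j 0)"
  shows "pmf (pa_degree m n j) d = (if off \<le> d then pmf (node_outdeg m n j) (nat (d - off)) else 0)"
proof -
  have degree: "pa_degree m n j = map_pmf (\<lambda>x. int x + off) (node_outdeg m n j)"
    unfolding pa_degree_def node_outdeg_def off_def kdelta_def by (simp add: map_pmf_comp)
  show ?thesis
  proof (cases "off \<le> d")
    case True
    then have "d = int (nat (d - off)) + off"
      by simp
    then have "pmf (pa_degree m n j) d = pmf (map_pmf (\<lambda>x. int x + off) (node_outdeg m n j)) (int (nat (d - off)) + off)"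
      unfolding degree by simp
    also have "\<dots> = pmf (node_outdeg m n j) (nat (d - off))"
      by (rule pmf_map_inj') (simp add: inj_def)
    finally show ?thesis
      using True by simp
  next
    case False
    then show ?thesis
      unfolding degree by (auto intro!: pmf_map_outside)
  qed
qed

lemma pmf_pa_degree_closed_form:
  fixes m j :: nat and d :: int
  defines "off \<equiv> int m * (1 - kdelta j 0)"
  shows "pmf (pa_degree m (j + r) j) d = real (fact (nat (d - off))) *
    (if d - off \<le> int m * int r then composition_weight_sum m j r (nat (int m * int r + off - d)) / attachment_normaliser m j r else 0)"
proof (cases "off \<le> d")
  case True
  then obtain x where x: "d - off = int x"
    by (metis nonneg_int_cases diff_ge_0_iff_ge)
  have "nat (int m * int r + off - d) = m * r - x" if "x \<le> m * r"
  proof -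
    have "int m * int r + off - d = int (m * r - x)"
      using that x by (simp add: of_nat_diff)
    then show ?thesis
      by simp
  qed
  moreover have "d - off \<le> int m * int r \<longleftrightarrow> x \<le> m * r"
    using x by (metis of_nat_le_iff of_nat_mult)
  ultimately show ?thesis
    using True x unfolding pmf_pa_degree off_def[symmetric] pmf_node_outdeg outdeg_closed_form_def
    by simp
next
  case False
  then have "m * r < nat (int m * int r + off - d)"
    by (simp add: zless_nat_eq_int_zless)
  then show ?thesis
    using False unfolding pmf_pa_degree off_def[symmetric] by (simp add: composition_weight_sum_eq_0)
qed

theorem theorem3:
  fixes m n j :: nat and d :: int
  assumes "m \<ge> 1" and "j \<le> n"
  shows "pmf (pa_degree m n j) d =
    real (fact (nat (d - int m * (1 - kdelta j 0)))) *
    (\<Sum>b \<in> {b \<in> {1..n-j} \<rightarrow>\<^sub>E {..nat (int m * (int (n - j) + 1 - kdelta j 0) - d)}.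
              int (\<Sum>r=1..n-j. b r) = int m * (int (n - j) + 1 - kdelta j 0) - d \<and>
              (n - j \<ge> 1 \<longrightarrow> b 1 \<le> min m ((m + 1) * j))}.
       (\<Prod>r=1..n-j. real (m choose b r)) *
       (\<Prod>r=1..n-j. pochhammer (real ((m + 1) * j + (\<Sum>l=1..r-1. b l) + r - 1)) (b r)) /
       (\<Prod>r<n-j. pochhammer (real ((m + 1) * (j + r) + 1)) m))"
proof -
  obtain r where n: "n = j + r"
    using assms(2) le_Suc_ex by blast
  define off where "off = int m * (1 - kdelta j 0)"
  have T: "int m * (int (n - j) + 1 - kdelta j 0) - d = int m * int r + off - d"
    unfolding n off_def by (simp add: algebra_simps)
  have "0 \<le> int m * int r + off - d \<longleftrightarrow> d - off \<le> int m * int r"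
    by linarith
  then show ?thesis
    unfolding T off_def[symmetric] sum_divide_distrib[symmetric]
    using sum_restricted_compositions[where r = r and T = "int m * int r + off - d" and m = m and j = j]
      pmf_pa_degree_closed_form[of m j r d]
    by (simp add: n off_def composition_weight_def attachment_normaliser_def)
qed

end
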